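(* Let $\mathcal{R}=(K,\varphi)$ be a rational set of regular languages, with $K\subseteq\Delta^+$ regular and $\varphi:\Delta\to2^{\Sigma^*}$ a regular language substitution such that $\varepsilon\in\varphi(\delta)$ for all $\delta\in\Delta$. Then the set $S(\mathcal{R})=\bigcup_{L\in\mathcal{R}}S(L)$ is finite.
   Context: A regular language substitution is a map $\varphi:\Delta\to2^{\Sigma^*}$ ($\Delta,\Sigma$ alphabets) with each $\varphi(\delta)$ regular, extended to words by $\varphi(\delta\cdot w)=\varphi(\delta)\cdot\varphi(w)$. $(K,\varphi)$ denotes the set $\{\varphi(w)\mid w\in K\}$; such sets with $K\subseteq\Delta^+$ regular are called rational sets of regular languages. For $L\subseteq\Sigma^*$, $S(L)=\{w\in L\setminus\{\varepsilon\}\mid \text{no } w'\in L\setminus\{\varepsilon\} \text{ has } |w'|<|w|\}$. *)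

theory Defs
  imports Main
begin

datatype 'a rexp = Zero | One | Atom 'a | Plus "'a rexp" "'a rexp"
  | Times "'a rexp" "'a rexp" | Star "'a rexp"

definition conc :: "'a list set \<Rightarrow> 'a list set \<Rightarrow> 'a list set" where
  "conc A B = {u @ v | u v. u \<in> A \<and> v \<in> B}"

inductive_set star :: "'a list set \<Rightarrow> 'a list set" for A where
  star_Nil: "[] \<in> star A"
| star_app: "u \<in> A \<Longrightarrow> v \<in> star A \<Longrightarrow> u @ v \<in> star A"

fun lang :: "'a rexp \<Rightarrow> 'a list set" where
  "lang Zero = {}"
| "lang One = {[]}"
| "lang (Atom a) = {[a]}"
| "lang (Plus r s) = lang r \<union> lang s"
| "lang (Times r s) = conc (lang r) (lang s)"
| "lang (Star r) = star (lang r)"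

definition regular :: "'a list set \<Rightarrow> bool" where
  "regular L \<longleftrightarrow> (\<exists>r. lang r = L)"

fun subst_word :: "('d \<Rightarrow> 's list set) \<Rightarrow> 'd list \<Rightarrow> 's list set" where
  "subst_word \<phi> [] = {[]}"
| "subst_word \<phi> (d # w) = conc (\<phi> d) (subst_word \<phi> w)"

definition shortest :: "'a list set \<Rightarrow> 'a list set" where
  "shortest L = {w \<in> L - {[]}. \<not> (\<exists>w' \<in> L - {[]}. length w' < length w)}"

end

theory Submission
  imports Defs
begin

text \<open>Since every \<open>\<phi> \<delta>\<close> contains the empty word, \<open>\<phi> w\<close> contains \<open>\<phi> \<delta>\<close> for every letter
  \<open>\<delta>\<close> of \<open>w\<close>. A nonempty word of \<open>\<phi> w\<close> has a nonempty factor in some \<open>\<phi> \<delta>\<close>, so a shortest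
  nonempty word of \<open>\<phi> w\<close> is no longer than a fixed nonempty word of that \<open>\<phi> \<delta>\<close>. With finitely
  many letters this bounds the length of all words in \<open>S(\<R>)\<close> uniformly, and over a finite
  alphabet there are only finitely many words of bounded length.\<close>

lemma shortest_length_le: "x \<in> shortest L \<Longrightarrow> u \<in> L - {[]} \<Longrightarrow> length x \<le> length u"
  unfolding shortest_def by (auto simp: not_less)

lemma Nil_in_subst_word:
  assumes "\<And>d. [] \<in> \<phi> d"
  shows "[] \<in> subst_word \<phi> w"
  by (induction w) (use assms in \<open>auto simp: conc_def\<close>)

lemma subset_subst_word:
  assumes "\<And>d. [] \<in> \<phi> d" and "d \<in> set w"
  shows "\<phi> d \<subseteq> subst_word \<phi> w"
  using assms(2)
proof (induction w)
  case Nil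
  then show ?case by simp
next
  case (Cons a w)
  show ?case
  proof
    fix u assume u: "u \<in> \<phi> d"
    show "u \<in> subst_word \<phi> (a # w)"
    proof (cases "d = a")
      case True
      then have "u @ [] \<in> conc (\<phi> a) (subst_word \<phi> w)"
        unfolding conc_def using u Nil_in_subst_word[of \<phi> w, OF assms(1)] by blast
      then show ?thesis by simp
    next
      case False
      with Cons.prems Cons.IH u have "u \<in> subst_word \<phi> w"
        by auto
      then have "[] @ u \<in> conc (\<phi> a) (subst_word \<phi> w)"
        unfolding conc_def using assms(1) by blast
      then show ?thesis by simp
    qed
  qed
qed

lemma nonempty_in_subst_word_imp:
  assumes "x \<in> subst_word \<phi> w" and "x \<noteq> []"
  shows "\<exists>d \<in> set w. \<phi> d - {[]} \<noteq> {}"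
  using assms
proof (induction w arbitrary: x)
  case Nil
  then show ?case by simp
next
  case (Cons a w)
  then obtain u v where "x = u @ v" "u \<in> \<phi> a" "v \<in> subst_word \<phi> w"
    by (auto simp: conc_def)
  with Cons show ?case by (cases "u = []") auto
qed

lemma shortest_subst_word_length_le:
  assumes "\<And>d. [] \<in> \<phi> d"
    and "\<And>d. \<phi> d - {[]} \<noteq> {} \<Longrightarrow> c d \<in> \<phi> d - {[]}"
    and "x \<in> shortest (subst_word \<phi> w)"
  shows "\<exists>d \<in> set w. length x \<le> length (c d)"
proof -
  have "x \<in> subst_word \<phi> w" "x \<noteq> []"
    using assms(3) by (auto simp: shortest_def)
  then obtain d where d: "d \<in> set w" "\<phi> d - {[]} \<noteq> {}"
    using nonempty_in_subst_word_imp by metis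
  then have "c d \<in> subst_word \<phi> w - {[]}"
    using assms(2)[of d] subset_subst_word[of \<phi>, OF assms(1) d(1)] by blast
  then have "length x \<le> length (c d)"
    using shortest_length_le[OF assms(3)] by blast
  with d(1) show ?thesis ..
qed

lemma finite_shortest_subst_word:
  fixes W :: "'d::finite list set" and \<phi> :: "'d \<Rightarrow> 's::finite list set"
  assumes "\<And>d. [] \<in> \<phi> d"
  shows "finite (\<Union>L \<in> subst_word \<phi> ` W. shortest L)"
proof -
  define c where "c d = (SOME u. u \<in> \<phi> d - {[]})" for d
  have c: "c d \<in> \<phi> d - {[]}" if "\<phi> d - {[]} \<noteq> {}" for d
    unfolding c_def by (rule someI_ex) (use that in blast)
  define M where "M = Max (range (\<lambda>d. length (c d)))"
  have "(\<Union>L \<in> subst_word \<phi> ` W. shortest L) \<subseteq> {xs. set xs \<subseteq> UNIV \<and> length xs \<le> M}"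
  proof
    fix x assume "x \<in> (\<Union>L \<in> subst_word \<phi> ` W. shortest L)"
    then obtain w where "x \<in> shortest (subst_word \<phi> w)"
      by blast
    then obtain d where "length x \<le> length (c d)"
      using shortest_subst_word_length_le[of \<phi> c] assms c by blast
    also have "\<dots> \<le> M"
      unfolding M_def by (rule Max_ge) auto
    finally show "x \<in> {xs. set xs \<subseteq> UNIV \<and> length xs \<le> M}"
      by simp
  qed
  moreover have "finite {xs::'s list. set xs \<subseteq> UNIV \<and> length xs \<le> M}"
    by (rule finite_lists_length_le) simp
  ultimately show ?thesis
    by (rule finite_subset)
qed

theorem corollary1:
  fixes K :: "'d::finite list set" and \<phi> :: "'d \<Rightarrow> 's::finite list set"
  assumes "regular K"
    and "[] \<notin> K"
    and "\<And>\<delta>. regular (\<phi> \<delta>)"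
    and "\<And>\<delta>. [] \<in> \<phi> \<delta>"
  shows "finite (\<Union>L \<in> subst_word \<phi> ` K. shortest L)"
  using finite_shortest_subst_word[OF assms(4)] .

end
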